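(* For $n\ge0$ let $A_n=\sum_{r=0}^n n!/r!$ (so $A_n/n!=\sum_{r=0}^n 1/r!$), let $d_n=\gcd(A_n,n!)$, let $N_n=A_n/d_n$ be the numerator of $\sum_{r=0}^n1/r!$ in lowest terms, and let $R_n=\gcd(N_n,N_{n+2})$. Let $$P^{\ast}=\{p \text{ prime} : 0!-1!+2!-3!+\cdots+(-1)^{p-1}(p-1)!\equiv 0 \pmod p\}.$$ Then the terms of the sequence $R_0,R_1,\dots$ are ones and all the primes of $P^\ast$. More precisely: $R_1=2$; for every odd $p\in P^{\ast}$, $R_{p-3}=p$; and $R_n=1$ for all other $n\ge 0$. *)

theory Defs
  imports "HOL-Computational_Algebra.Primes"
begin

definition A :: "nat \<Rightarrow> nat" where
  "A n = (\<Sum>r=0..n. fact n div fact r)"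

definition d :: "nat \<Rightarrow> nat" where
  "d n = gcd (A n) (fact n)"

definition N :: "nat \<Rightarrow> nat" where
  "N n = A n div d n"

definition R :: "nat \<Rightarrow> nat" where
  "R n = gcd (N n) (N (n + 2))"

definition Pstar :: "nat set" where
  "Pstar = {p. prime p \<and> (\<Sum>k<p. (-1::int) ^ k * fact k) mod int p = 0}"

end

theory Submission
  imports Defs "HOL-Number_Theory.Cong"
begin

text \<open>
  From \<open>A (n + 1) = (n + 1) A n + 1\<close> we get \<open>A (n + 2) = (n + 2)(n + 1) A n + (n + 3)\<close>,
  so \<open>R n\<close>, a common divisor of \<open>A n\<close> and \<open>A (n + 2)\<close>, divides \<open>n + 3\<close>.

  If \<open>n + 3 \<ge> 6\<close> is composite, it divides \<open>n!\<close>. A prime \<open>q\<close> dividing \<open>R n\<close> divides the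
  reduced numerators \<open>N n\<close> and \<open>N (n + 2)\<close>, so \<open>q\<^sup>k | n!\<close> forces \<open>q\<^sup>k\<^sup>+\<^sup>1\<close> to divide
  \<open>A n\<close> and \<open>A (n + 2)\<close>, hence \<open>n + 3\<close>, hence \<open>n!\<close>. Every power of \<open>q\<close> would divide \<open>n!\<close>.

  If \<open>p = n + 3\<close> is prime, then \<open>R n \<in> {1, p}\<close>, and \<open>R n = p\<close> exactly when \<open>p | A (p - 1)\<close>.
  Since \<open>(p - 1)!/r! \<equiv> (-1)\<^sup>p\<^sup>-\<^sup>1\<^sup>-\<^sup>r (p - 1 - r)! (mod p)\<close>, \<open>A (p - 1)\<close> is congruent to
  \<open>0! - 1! + 2! - \<dots> \<plusminus> (p - 1)!\<close>, so this happens exactly for \<open>p \<in> P\<^sup>*\<close>.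
\<close>

lemma A_0 [simp]: "A 0 = 1"
  by (simp add: A_def)

lemma A_Suc: "A (Suc n) = Suc n * A n + 1"
proof -
  have "A (Suc n) = (\<Sum>r=0..n. fact (Suc n) div fact r) + 1"
    by (simp add: A_def)
  also have "(\<Sum>r=0..n. fact (Suc n) div fact r) = (\<Sum>r=0..n. Suc n * (fact n div fact r :: nat))"
    by (intro sum.cong refl) (simp add: fact_dvd div_mult_swap)
  finally show ?thesis by (simp add: A_def sum_distrib_left)
qed

lemma A_add_two: "A (n + 2) = (n + 2) * (n + 1) * A n + (n + 3)"
  by (simp add: A_Suc[of "Suc n"] A_Suc[of n] algebra_simps)

lemma A_cong_partial_alternating_fact_sum:
  assumes "j \<le> n"
  shows "[int (A n) = (\<Sum>k<j. (-1) ^ k * fact k) + (-1) ^ j * fact j * int (A (n - j))] (mod int (Suc n))"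
  using assms
proof (induction j)
  case 0
  show ?case by simp
next
  case (Suc j)
  have "int (A (n - j)) = int (n - j) * int (A (n - Suc j)) + 1"
    using Suc.prems A_Suc[of "n - Suc j"] by (simp add: Suc_diff_Suc)
  moreover have "[int (n - j) = - int (Suc j)] (mod int (Suc n))"
    \<comment> \<open>each unrolling of the recurrence thus contributes one alternating factorial\<close>
    using Suc.prems by (simp add: cong_iff_dvd_diff add.commute)
  ultimately have "[(-1) ^ j * fact j * int (A (n - j))
      = (-1) ^ j * fact j * (- int (Suc j) * int (A (n - Suc j)) + 1)] (mod int (Suc n))"
    by (auto intro!: cong_mult cong_add)
  also have "(-1) ^ j * fact j * (- int (Suc j) * int (A (n - Suc j)) + 1)
      = (-1) ^ j * fact j + (-1) ^ Suc j * fact (Suc j) * int (A (n - Suc j))"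
    by (simp add: algebra_simps)
  finally have step: "[(-1) ^ j * fact j * int (A (n - j))
      = (-1) ^ j * fact j + (-1) ^ Suc j * fact (Suc j) * int (A (n - Suc j))] (mod int (Suc n))" .
  have "[int (A n) = (\<Sum>k<j. (-1) ^ k * fact k) + (-1) ^ j * fact j * int (A (n - j))] (mod int (Suc n))"
    using Suc by simp
  also note cong_add[OF cong_refl step]
  finally show ?case by (simp add: add_diff_eq add.assoc)
qed

lemma A_pred_cong_alternating_fact_sum:
  assumes "p > 0"
  shows "[int (A (p - 1)) = (\<Sum>k<p. (-1) ^ k * fact k)] (mod int p)"
proof -
  obtain n where p: "p = Suc n"
    using assms by (cases p) auto
  show ?thesis
    using A_cong_partial_alternating_fact_sum[of n n] by (simp add: p)
qed

lemma prime_in_Pstar_iff: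
  assumes "prime p"
  shows "p \<in> Pstar \<longleftrightarrow> p dvd A (p - 1)"
proof -
  have "int p dvd int (A (p - 1)) \<longleftrightarrow> int p dvd (\<Sum>k<p. (-1) ^ k * fact k)"
    using A_pred_cong_alternating_fact_sum[OF prime_gt_0_nat[OF assms]] by (rule cong_dvd_iff)
  then have "p dvd A (p - 1) \<longleftrightarrow> int p dvd (\<Sum>k<p. (-1) ^ k * fact k)"
    by (simp only: int_dvd_int_iff)
  with assms show ?thesis
    unfolding Pstar_def mem_Collect_eq by (metis dvd_eq_mod_eq_0)
qed

lemma A_eq_d_mult_N: "A n = d n * N n"
  by (simp add: N_def d_def)

lemma R_dvd_add_three: "R n dvd n + 3"
proof -
  have "R n dvd N n" "R n dvd N (n + 2)"
    by (simp_all add: R_def)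
  then have "R n dvd A n" "R n dvd A (n + 2)"
    by (simp_all add: A_eq_d_mult_N)
  then show ?thesis
    by (metis A_add_two dvd_add_right_iff dvd_mult)
qed

lemma prime_dvd_div_gcd:
  fixes a b p :: nat
  assumes "prime p" "p dvd a" "\<not> p dvd b"
  shows "p dvd a div gcd a b"
proof -
  have "p dvd gcd a b * (a div gcd a b)"
    using assms(2) by simp
  moreover have "\<not> p dvd gcd a b"
    using assms(3) by (meson dvd_trans gcd_dvd2)
  ultimately show ?thesis
    using assms(1) prime_dvd_mult_iff by blast
qed

lemma power_Suc_dvd_if_dvd_div_gcd:
  fixes a b q :: nat
  assumes "q dvd a div gcd a b"
  shows "q ^ k dvd b \<Longrightarrow> q ^ Suc k dvd a"
proof (induction k)
  case 0
  have "a div gcd a b dvd a"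
    by (metis dvd_div_mult_self dvd_triv_left gcd_dvd1)
  with assms show ?case
    by (simp add: dvd_trans)
next
  case (Suc k)
  have "q ^ k dvd b"
    using Suc.prems by (simp add: dvd_mult_right)
  with Suc have "q ^ Suc k dvd gcd a b"
    by simp
  then have "q ^ Suc k * q dvd gcd a b * (a div gcd a b)"
    using assms by (rule mult_dvd_mono)
  then show ?case
    by (simp add: mult.commute)
qed

lemma mult_dvd_fact:
  fixes x y :: nat
  assumes "0 < x" "x < y"
  shows "x * y dvd fact y"
proof -
  have "x dvd fact (y - 1)"
    using assms by (intro dvd_fact) auto
  then have "x * y dvd fact (y - 1) * y"
    by simp
  also have "fact (y - 1) * y = fact y"
    using assms by (simp add: fact_reduce[of y] mult.commute)
  finally show ?thesis .
qed

lemma composite_dvd_fact_minus_three: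
  fixes c :: nat
  assumes "\<not> prime c" "6 \<le> c"
  shows "c dvd fact (c - 3)"
proof -
  obtain a b where c: "c = a * b" "2 \<le> a" "a \<le> b"
  proof -
    obtain m where m: "m dvd c" "m \<noteq> 1" "m \<noteq> c"
      using assms prime_nat_iff by auto
    then obtain k where k: "c = m * k"
      by blast
    have "m \<noteq> 0" "k \<noteq> 0"
      using k assms(2) by (auto intro: ccontr)
    moreover have "k \<noteq> 1"
      using m k by auto
    ultimately have "2 \<le> m" "2 \<le> k"
      using m by auto
    then show ?thesis
      using that[of "min m k" "max m k"] k by (simp add: min_def max_def mult.commute)
  qed
  show ?thesis
  proof (cases "a = b")
    case False
    have "2 * b \<le> c" "3 \<le> b"
      using c False by simp_all
    then have "b \<le> c - 3"
      by linarith
    moreover have "c dvd fact b"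
      using c False mult_dvd_fact[of a b] by simp
    ultimately show ?thesis
      by (meson dvd_trans fact_dvd)
  next
    case True
    have "3 \<le> a"
      using c True assms(2) by (cases "a = 2") auto
    then have "3 * a \<le> c"
      using c True by simp
    then have "2 * a \<le> c - 3"
      using \<open>3 \<le> a\<close> by linarith
    moreover have "c dvd a * (2 * a)"
      using c True by simp
    moreover have "a * (2 * a) dvd fact (2 * a)"
      using \<open>3 \<le> a\<close> by (intro mult_dvd_fact) auto
    ultimately show ?thesis
      by (meson dvd_trans fact_dvd)
  qed
qed

lemma power_Suc_dvd_add_three_if_dvd_R:
  assumes "q dvd R n" "q ^ k dvd fact n"
  shows "q ^ Suc k dvd n + 3"
proof -
  have "q dvd A n div gcd (A n) (fact n)" "q dvd A (n + 2) div gcd (A (n + 2)) (fact (n + 2))"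
    using assms(1) by (simp_all add: R_def N_def d_def)
  moreover have "q ^ k dvd fact (n + 2)"
    using assms(2) by (meson dvd_trans fact_dvd le_add1)
  ultimately have "q ^ Suc k dvd A n" "q ^ Suc k dvd A (n + 2)"
    using assms(2) power_Suc_dvd_if_dvd_div_gcd by blast+
  then show ?thesis
    by (metis A_add_two dvd_add_right_iff dvd_mult)
qed

lemma R_eq_one_if_composite:
  assumes "\<not> prime (n + 3)" "n \<noteq> 1"
  shows "R n = 1"
proof (rule ccontr)
  assume "R n \<noteq> 1"
  then obtain q where q: "prime q" "q dvd R n"
    using prime_factor_nat by blast
  have "prime (3::nat)" "prime (5::nat)"
    by simp_all
  with assms(1) have "n + 3 \<noteq> 3" "n + 3 \<noteq> 5"
    by metis+
  with assms have "n + 3 dvd fact n"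
    using composite_dvd_fact_minus_three[of "n + 3"] by simp
  have "q ^ k dvd fact n" for k
  proof (induction k)
    case 0
    show ?case by simp
  next
    case (Suc k)
    with q(2) \<open>n + 3 dvd fact n\<close> show ?case
      by (meson dvd_trans power_Suc_dvd_add_three_if_dvd_R)
  qed
  then have "q ^ fact n \<le> fact n"
    by (simp add: dvd_imp_le)
  moreover have "fact n < (2::nat) ^ fact n"
    by (rule less_exp)
  moreover have "(2::nat) ^ fact n \<le> q ^ fact n"
    using prime_ge_2_nat[OF q(1)] by (rule power_mono) simp
  ultimately show False
    by simp
qed

lemma R_eq_one_if_prime_not_Pstar:
  assumes "prime (n + 3)" "n + 3 \<notin> Pstar"
  shows "R n = 1"
proof -
  have "\<not> n + 3 dvd A (n + 2)"
    using prime_in_Pstar_iff[OF assms(1)] assms(2) by simp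
  moreover have "R n dvd A (n + 2)"
    unfolding R_def A_eq_d_mult_N by (meson dvd_mult dvd_trans gcd_dvd2)
  ultimately have "R n \<noteq> n + 3"
    by auto
  with assms(1) R_dvd_add_three[of n] show ?thesis
    unfolding prime_nat_iff by blast
qed

lemma R_prime_minus_three:
  assumes "p \<in> Pstar" "odd p"
  shows "R (p - 3) = p"
proof -
  have "prime p"
    using assms(1) by (simp add: Pstar_def)
  then have "p \<noteq> 2"
    using assms(2) by auto
  with prime_ge_2_nat[OF \<open>prime p\<close>] have "3 \<le> p"
    by linarith
  then obtain n where p: "p = n + 3"
    by (metis add.commute le_Suc_ex)
  have "p dvd A (n + 2)"
    using assms(1) prime_in_Pstar_iff[OF \<open>prime p\<close>] by (simp add: p)
  then have "p dvd (n + 2) * (n + 1) * A n"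
    by (metis A_add_two dvd_add_left_iff dvd_refl p)
  moreover have "\<not> p dvd n + 2" "\<not> p dvd n + 1"
    by (auto simp: p dest: dvd_imp_le)
  ultimately have "p dvd A n"
    using \<open>prime p\<close> prime_dvd_mult_iff by blast
  moreover have "\<not> p dvd fact n" "\<not> p dvd fact (n + 2)"
    using \<open>prime p\<close> by (simp_all add: prime_dvd_fact_iff p del: fact_Suc)
  ultimately have "p dvd N n" "p dvd N (n + 2)"
    using \<open>p dvd A (n + 2)\<close> \<open>prime p\<close> by (simp_all add: N_def d_def prime_dvd_div_gcd)
  then have "p dvd R n"
    by (simp add: R_def)
  with R_dvd_add_three[of n] show ?thesis
    by (simp add: p dvd_antisym)
qed

lemma R_one: "R 1 = 2"
proof -
  have "A 1 = 2" "A 3 = 16"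
    using A_Suc[of 0] A_add_two[of 1] by (simp_all add: numeral_eq_Suc)
  moreover have "fact 3 = (6::nat)"
    by (simp add: fact_numeral)
  ultimately have "N 1 = 2" "N 3 = 8"
    by (simp_all add: N_def d_def gcd_non_0_nat)
  then show ?thesis
    by (simp add: R_def numeral_3_eq_3)
qed

theorem theorem5p1:
  shows "R 1 = 2
    \<and> (\<forall>p \<in> Pstar. odd p \<longrightarrow> R (p - 3) = p)
    \<and> (\<forall>n. n \<noteq> 1 \<and> \<not> (\<exists>p \<in> Pstar. odd p \<and> n = p - 3) \<longrightarrow> R n = 1)"
proof (intro conjI ballI allI impI)
  show "R 1 = 2"
    by (rule R_one)
  show "R (p - 3) = p" if "p \<in> Pstar" "odd p" for p
    using that by (rule R_prime_minus_three)
  fix n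
  assume n: "n \<noteq> 1 \<and> \<not> (\<exists>p \<in> Pstar. odd p \<and> n = p - 3)"
  show "R n = 1"
  proof (cases "prime (n + 3)")
    case True
    then have "odd (n + 3)"
      by (rule prime_odd_nat) simp
    moreover have "n = (n + 3) - 3"
      by simp
    ultimately have "n + 3 \<notin> Pstar"
      using n by blast
    with True show ?thesis
      by (rule R_eq_one_if_prime_not_Pstar)
  next
    case False
    with n show ?thesis
      by (simp add: R_eq_one_if_composite)
  qed
qed

end
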